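(* Suppose Assumption A holds and $\rho>0$. Then for every $y\in\mathbb{R}^m$ (with $X(y)\neq\emptyset$), the vectors $Ex$ and $A_kx_k$, $k=1,\dots,K$, are constant as $x$ ranges over $X(y)$. Moreover, the dual function $d$ is differentiable everywhere and $$\nabla d(y)=q-Ex(y),$$ where $x(y)\in X(y)$ is any minimizer of $L(\cdot\,;y)$.
   Context: Let $K\ge1$ and let $x=(x_1^T,\dots,x_K^T)^T\in\mathbb{R}^n$ be partitioned into blocks $x_k$; let $E=(E_1,\dots,E_K)\in\mathbb{R}^{m\times n}$ be partitioned accordingly, $q\in\mathbb{R}^m$, and $X=\prod_{k=1}^K X_k$. Consider the problem (P): minimize $f(x)=\sum_{k=1}^K f_k(x_k)$ subject to $Ex=\sum_k E_kx_k=q$, $x_k\in X_k$. Assumption A: (a) the optimal value of (P) and the optimal value of its (Lagrangian) dual are attained, and $X\cap\mathrm{int}(\mathrm{dom}\, f)\cap\{x: Ex=q\}\ne\emptyset$; (b) $f_k(x_k)=g_k(A_kx_k)+h_k(x_k)$ with $g_k,h_k$ convex and continuous on their domains and $A_k$ given matrices (not necessarily of full column rank, possibly zero); (c) each $g_k$ is strictly convex and continuously differentiable on the interior of its domain, and there is $L>0$ with $\|A_k^T\nabla g_k(A_kx_k)-A_k^T\nabla g_k(A_kx_k')\|\le L\|x_k-x_k'\|$ for all $x_k,x_k'\in X_k$; (d) each $h_k$ either has polyhedral epigraph, or equals $\lambda_k\|x_k\|_1+\sum_J w_J\|x_{k,J}\|_2$ for some partition $(x_{k,J})_J$ of $x_k$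 and nonnegative constants $\lambda_k,w_J$, or is a sum of two such functions; (e) for any finite $y$ and $\xi$, $\sum_k h_k(x_k)$ is finite for all $x\in\{x: L(x;y)\le\xi\}\cap X$; (f) each $E_k$ has full column rank; (g) each $X_k$ is a compact polyhedral set. The constraint $x_k\in X_k$ is absorbed into $h_k$ by adding the indicator function of $X_k$, so all minimizations over $x$ are implicitly over $X$. Write $g(Ax)=\sum_k g_k(A_kx_k)$ and $h(x)=\sum_k h_k(x_k)$. For a fixed $\rho>0$, the augmented Lagrangian is $L(x;y)=f(x)+\langle y,q-Ex\rangle+\frac{\rho}{2}\|q-Ex\|^2$, the dual function is $d(y)=\min_x L(x;y)$, and $X(y)$ denotes the set of minimizers of $L(\cdot\,;y)$. *)

theory Defs
  imports "HOL-Analysis.Analysis"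
begin

definition strict_convex_on :: "'a::real_vector set \<Rightarrow> ('a \<Rightarrow> real) \<Rightarrow> bool" where
  "strict_convex_on S f \<longleftrightarrow> convex S \<and>
     (\<forall>x\<in>S. \<forall>y\<in>S. \<forall>t::real. x \<noteq> y \<and> 0 < t \<and> t < 1 \<longrightarrow>
        f ((1 - t) *\<^sub>R x + t *\<^sub>R y) < (1 - t) * f x + t * f y)"

text \<open>Blocks: the coordinates of x :: real^'n are partitioned by blk :: 'n => 'k.
  The block x_k is identified with its zero-padded copy blockproj blk k x,
  an element of the block subspace blocksub blk k (isomorphic to R^{n_k}).\<close>
definition blockproj :: "('n \<Rightarrow> 'k) \<Rightarrow> 'k \<Rightarrow> real^'n \<Rightarrow> real^'n" where
  "blockproj blk k x = (\<chi> i. if blk i = k then x $ i else 0)"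

definition blocksub :: "('n \<Rightarrow> 'k) \<Rightarrow> 'k \<Rightarrow> (real^'n) set" where
  "blocksub blk k = {v. \<forall>i. blk i \<noteq> k \<longrightarrow> v $ i = 0}"

text \<open>h_k has polyhedral epigraph (h_k is finite exactly on its domain D).\<close>
definition polyhedral_epi :: "(real^'n) set \<Rightarrow> (real^'n \<Rightarrow> real) \<Rightarrow> bool" where
  "polyhedral_epi D h \<longleftrightarrow> polyhedron {(x, t). x \<in> D \<and> h x \<le> t}"

text \<open>h_k = lambda_k ||x_k||_1 + sum_J w_J ||x_{k,J}||_2 for a partition (x_{k,J})_J of x_k
  (the partition is given by the fibres of grp on block k), with domain the whole block.\<close>
definition l1_group_type :: "('n \<Rightarrow> 'k) \<Rightarrow> 'k \<Rightarrow> (real^'n) set \<Rightarrow> (real^'n \<Rightarrow> real) \<Rightarrow> bool" where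
  "l1_group_type blk k D h \<longleftrightarrow> D = blocksub blk k \<and>
     (\<exists>(lam::real) (grp::'n \<Rightarrow> nat) (w::nat \<Rightarrow> real). lam \<ge> 0 \<and> (\<forall>J. w J \<ge> 0) \<and>
        (\<forall>x\<in>D. h x = lam * (\<Sum>i\<in>{i. blk i = k}. \<bar>x $ i\<bar>)
            + (\<Sum>J\<in>grp ` {i. blk i = k}. w J * sqrt (\<Sum>i\<in>{i. blk i = k \<and> grp i = J}. (x $ i)\<^sup>2))))"

definition basic_h :: "('n \<Rightarrow> 'k) \<Rightarrow> 'k \<Rightarrow> (real^'n) set \<Rightarrow> (real^'n \<Rightarrow> real) \<Rightarrow> bool" where
  "basic_h blk k D h \<longleftrightarrow> D \<subseteq> blocksub blk k \<and> (polyhedral_epi D h \<or> l1_group_type blk k D h)"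

definition admissible_h :: "('n \<Rightarrow> 'k) \<Rightarrow> 'k \<Rightarrow> (real^'n) set \<Rightarrow> (real^'n \<Rightarrow> real) \<Rightarrow> bool" where
  "admissible_h blk k D h \<longleftrightarrow> basic_h blk k D h \<or>
     (\<exists>D1 h1 D2 h2. basic_h blk k D1 h1 \<and> basic_h blk k D2 h2 \<and> D = D1 \<inter> D2 \<and>
        (\<forall>x\<in>D. h x = h1 x + h2 x))"

definition objf :: "('n \<Rightarrow> 'k::finite) \<Rightarrow> ('k \<Rightarrow> real^'n^'p) \<Rightarrow> ('k \<Rightarrow> real^'p \<Rightarrow> real)
    \<Rightarrow> ('k \<Rightarrow> real^'n \<Rightarrow> real) \<Rightarrow> real^'n \<Rightarrow> real" where
  "objf blk A g h x = (\<Sum>k\<in>UNIV. g k (A k *v blockproj blk k x) + h k (blockproj blk k x))"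

definition domf :: "('n \<Rightarrow> 'k) \<Rightarrow> ('k \<Rightarrow> real^'n^'p) \<Rightarrow> ('k \<Rightarrow> (real^'p) set)
    \<Rightarrow> ('k \<Rightarrow> (real^'n) set) \<Rightarrow> (real^'n) set" where
  "domf blk A Dg Dh = {x. \<forall>k. A k *v blockproj blk k x \<in> Dg k \<and> blockproj blk k x \<in> Dh k}"

definition Xprod :: "('n \<Rightarrow> 'k) \<Rightarrow> ('k \<Rightarrow> (real^'n) set) \<Rightarrow> (real^'n) set" where
  "Xprod blk X = {x. \<forall>k. blockproj blk k x \<in> X k}"

definition auglag :: "(real^'n \<Rightarrow> real) \<Rightarrow> real^'n^'m \<Rightarrow> real^'m \<Rightarrow> real \<Rightarrow> real^'n \<Rightarrow> real^'m \<Rightarrow> real" where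
  "auglag f E q rho x y = f x + y \<bullet> (q - E *v x) + rho / 2 * (norm (q - E *v x))\<^sup>2"

end

theory Submission
  imports Defs
begin

(* The midpoint identity for the quadratic penalty gives quadratic growth of L(.;y)
   around a minimizer in the residual Ex.  Hence Ex is unique on the minimizers and
   Lipschitz in y with constant 2/rho, and comparing L at the minimizers for y and y'
   bounds the first-order remainder of d by (2/rho) |y' - y|^2, which yields
   differentiability.  For the block-separable objective f = sum_k g_k(A_k x_k) + h_k(x_k)
   we then check convexity, and strict convexity of the g_k turns the fact that f is
   affine along the segment between two minimizers into uniqueness of every A_k x_k. *)

definition minimizes :: "'a set \<Rightarrow> ('a \<Rightarrow> real) \<Rightarrow> 'a \<Rightarrow> bool" where
  "minimizes S \<phi> x \<longleftrightarrow> x \<in> S \<and> (\<forall>z\<in>S. \<phi> x \<le> \<phi> z)"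

(* Parallelogram law in the form needed for the penalty term at a midpoint. *)
lemma norm_diff_midpoint_sq:
  fixes q u w :: "'a::real_inner"
  shows "(norm (q - ((1/2) *\<^sub>R u + (1/2) *\<^sub>R w)))\<^sup>2 =
     ((norm (q - u))\<^sup>2 + (norm (q - w))\<^sup>2) / 2 - (norm (w - u))\<^sup>2 / 4"
  by (simp add: power2_norm_eq_inner inner_simps inner_commute algebra_simps field_simps)

lemma auglag_shift:
  fixes f :: "real^'n \<Rightarrow> real" and E :: "real^'n^'m"
  shows "auglag f E q rho x y' = auglag f E q rho x y + (y' - y) \<bullet> (q - E *v x)"
  unfolding auglag_def by (simp add: inner_simps algebra_simps)

lemma auglag_midpoint:
  fixes f :: "real^'n \<Rightarrow> real" and E :: "real^'n^'m"
  shows "auglag f E q rho ((1/2) *\<^sub>R a + (1/2) *\<^sub>R b) y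
     = (auglag f E q rho a y + auglag f E q rho b y) / 2
       + (f ((1/2) *\<^sub>R a + (1/2) *\<^sub>R b) - (f a + f b) / 2)
       - rho/8 * (norm (E *v b - E *v a))\<^sup>2"
  unfolding auglag_def matrix_vector_right_distrib matrix_vector_mult_scaleR norm_diff_midpoint_sq
  by (simp add: inner_simps algebra_simps field_simps)

lemma convex_on_midpoint:
  "convex_on S f \<Longrightarrow> a \<in> S \<Longrightarrow> b \<in> S \<Longrightarrow> f ((1/2) *\<^sub>R a + (1/2) *\<^sub>R b) \<le> (f a + f b) / 2"
  using convex_onD[of S f "1/2" a b] by simp

lemma convex_midpoint: "convex S \<Longrightarrow> a \<in> S \<Longrightarrow> b \<in> S \<Longrightarrow> (1/2) *\<^sub>R a + (1/2) *\<^sub>R b \<in> S"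
  by (rule convexD) auto

lemma auglag_quadratic_growth:
  fixes f :: "real^'n \<Rightarrow> real" and E :: "real^'n^'m"
  assumes "convex F" "convex_on F f"
    and x: "minimizes F (\<lambda>x. auglag f E q rho x y) x" and z: "z \<in> F"
  shows "auglag f E q rho z y - auglag f E q rho x y \<ge> rho/4 * (norm (E *v z - E *v x))\<^sup>2"
proof -
  let ?m = "(1/2) *\<^sub>R x + (1/2) *\<^sub>R z"
  have "x \<in> F" using x unfolding minimizes_def by blast
  then have "auglag f E q rho x y \<le> auglag f E q rho ?m y"
    using x z convex_midpoint[OF assms(1)] unfolding minimizes_def by blast
  moreover have "f ?m \<le> (f x + f z) / 2" using convex_on_midpoint[OF assms(2) \<open>x \<in> F\<close> z] .
  ultimately show ?thesis using auglag_midpoint[of f E q rho x z y] by (simp add: field_simps)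
qed

lemma minimizers_same_residual:
  fixes f :: "real^'n \<Rightarrow> real" and E :: "real^'n^'m"
  assumes "convex F" "convex_on F f" "rho > 0"
    and x: "minimizes F (\<lambda>x. auglag f E q rho x y) x"
    and x': "minimizes F (\<lambda>x. auglag f E q rho x y) x'"
  shows "E *v x = E *v x'" and "f ((1/2) *\<^sub>R x + (1/2) *\<^sub>R x') = (f x + f x') / 2"
proof -
  have F: "x \<in> F" "x' \<in> F" using x x' unfolding minimizes_def by auto
  have same_value: "auglag f E q rho x y = auglag f E q rho x' y"
    using x x' F unfolding minimizes_def by (meson order_antisym)
  have "rho/4 * (norm (E *v x' - E *v x))\<^sup>2 \<le> 0"
    using auglag_quadratic_growth[OF assms(1,2) x F(2)] same_value by simp
  with \<open>rho > 0\<close> show res: "E *v x = E *v x'" by (simp add: mult_le_0_iff)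
  have "auglag f E q rho x y \<le> auglag f E q rho ((1/2) *\<^sub>R x + (1/2) *\<^sub>R x') y"
    using x convex_midpoint[OF assms(1) F] unfolding minimizes_def by blast
  then have "(f x + f x') / 2 \<le> f ((1/2) *\<^sub>R x + (1/2) *\<^sub>R x')"
    using auglag_midpoint[of f E q rho x x' y] same_value res by simp
  with convex_on_midpoint[OF assms(2) F] show "f ((1/2) *\<^sub>R x + (1/2) *\<^sub>R x') = (f x + f x') / 2"
    by linarith
qed

lemma minimizer_residual_lipschitz:
  fixes f :: "real^'n \<Rightarrow> real" and E :: "real^'n^'m"
  assumes "convex F" "convex_on F f" "rho > 0"
    and x: "minimizes F (\<lambda>x. auglag f E q rho x y) x"
    and z: "minimizes F (\<lambda>x. auglag f E q rho x y') z"
  shows "norm (E *v z - E *v x) \<le> 2/rho * norm (y' - y)"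
proof -
  define n where "n = norm (E *v z - E *v x)"
  have F: "x \<in> F" "z \<in> F" using x z unfolding minimizes_def by auto
  have grow_y: "auglag f E q rho z y - auglag f E q rho x y \<ge> rho/4 * n\<^sup>2"
    using auglag_quadratic_growth[OF assms(1,2) x F(2)] unfolding n_def .
  have grow_y': "auglag f E q rho x y' - auglag f E q rho z y' \<ge> rho/4 * n\<^sup>2"
    using auglag_quadratic_growth[OF assms(1,2) z F(1)] unfolding n_def
    by (simp add: norm_minus_commute)
  have "(auglag f E q rho z y - auglag f E q rho x y) + (auglag f E q rho x y' - auglag f E q rho z y')
      = (y' - y) \<bullet> (E *v z - E *v x)"
    using auglag_shift[of f E q rho z y' y] auglag_shift[of f E q rho x y' y]
    by (simp add: inner_simps algebra_simps)
  also have "\<dots> \<le> norm (y' - y) * n"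
    unfolding n_def by (rule norm_cauchy_schwarz)
  finally have "rho/2 * n * n \<le> norm (y' - y) * n"
    using grow_y grow_y' by (simp add: power2_eq_square)
  moreover have "n \<ge> 0" unfolding n_def by simp
  ultimately have "rho/2 * n \<le> norm (y' - y)"
    by (cases "n = 0") (use \<open>rho > 0\<close> in auto)
  with \<open>rho > 0\<close> show ?thesis unfolding n_def by (simp add: field_simps)
qed

lemma Inf_at_minimizer: "minimizes S \<phi> x \<Longrightarrow> Inf (\<phi> ` S) = \<phi> x"
  unfolding minimizes_def by (intro cInf_eq_minimum) auto

lemma dual_second_order_bound:
  fixes f :: "real^'n \<Rightarrow> real" and E :: "real^'n^'m"
  assumes "convex F" "convex_on F f" "rho > 0"
    and x: "minimizes F (\<lambda>x. auglag f E q rho x y) x"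
    and z: "minimizes F (\<lambda>x. auglag f E q rho x y') z"
  defines "d \<equiv> \<lambda>y. Inf ((\<lambda>x. auglag f E q rho x y) ` F)"
  shows "\<bar>d y' - d y - (q - E *v x) \<bullet> (y' - y)\<bar> \<le> 2/rho * (norm (y' - y))\<^sup>2"
proof -
  let ?L = "\<lambda>x y. auglag f E q rho x y"
  have F: "x \<in> F" "z \<in> F" using x z unfolding minimizes_def by auto
  have upper: "d y' \<le> ?L x y'" and lower: "?L x y \<le> ?L z y"
    using x z F unfolding d_def Inf_at_minimizer[OF z] Inf_at_minimizer[OF x] minimizes_def
    by auto
  have "d y' - d y - (q - E *v x) \<bullet> (y' - y) = ?L z y' - ?L x y'"
    unfolding d_def Inf_at_minimizer[OF z] Inf_at_minimizer[OF x]
    using auglag_shift[of f E q rho x y' y] by (simp add: inner_commute)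
  moreover have "?L z y' - ?L x y' \<ge> - ((y' - y) \<bullet> (E *v z - E *v x))"
    using lower auglag_shift[of f E q rho x y' y] auglag_shift[of f E q rho z y' y]
    by (simp add: inner_simps algebra_simps)
  moreover have "?L z y' - ?L x y' \<le> 0"
    using upper unfolding d_def Inf_at_minimizer[OF z] by simp
  moreover have "(y' - y) \<bullet> (E *v z - E *v x) \<le> 2/rho * (norm (y' - y))\<^sup>2"
  proof -
    have "(y' - y) \<bullet> (E *v z - E *v x) \<le> norm (y' - y) * norm (E *v z - E *v x)"
      by (rule norm_cauchy_schwarz)
    also have "\<dots> \<le> norm (y' - y) * (2/rho * norm (y' - y))"
      by (rule mult_left_mono[OF minimizer_residual_lipschitz[OF assms(1-3) x z]]) simp
    also have "\<dots> = 2/rho * (norm (y' - y))\<^sup>2" by (simp add: power2_eq_square algebra_simps)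
    finally show ?thesis .
  qed
  ultimately show ?thesis unfolding abs_le_iff by linarith
qed

lemma has_derivative_quadratic_remainder:
  fixes \<phi> :: "'a::real_normed_vector \<Rightarrow> real"
  assumes "bounded_linear lin" "C > 0"
    and remainder: "\<And>y'. \<bar>\<phi> y' - \<phi> y - lin (y' - y)\<bar> \<le> C * (norm (y' - y))\<^sup>2"
  shows "(\<phi> has_derivative lin) (at y)"
  unfolding has_derivative_at'
proof (intro conjI allI impI \<open>bounded_linear lin\<close>)
  fix e :: real assume "e > 0"
  show "\<exists>\<delta>>0. \<forall>y'. 0 < norm (y' - y) \<and> norm (y' - y) < \<delta> \<longrightarrow>
      norm (\<phi> y' - \<phi> y - lin (y' - y)) / norm (y' - y) < e"
  proof (intro exI[of _ "e / C"] conjI allI impI)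
    show "e / C > 0" using \<open>e > 0\<close> \<open>C > 0\<close> by simp
    fix y' assume y': "0 < norm (y' - y) \<and> norm (y' - y) < e / C"
    have "norm (\<phi> y' - \<phi> y - lin (y' - y)) / norm (y' - y) \<le> C * (norm (y' - y))\<^sup>2 / norm (y' - y)"
      using remainder[of y'] y' by (intro divide_right_mono) auto
    also have "\<dots> = C * norm (y' - y)" using y' by (simp add: power2_eq_square)
    also have "\<dots> < e" using y' \<open>C > 0\<close> by (simp add: field_simps)
    finally show "norm (\<phi> y' - \<phi> y - lin (y' - y)) / norm (y' - y) < e" .
  qed
qed

lemma dual_has_derivative:
  fixes f :: "real^'n \<Rightarrow> real" and E :: "real^'n^'m"
  assumes "convex F" "convex_on F f" "rho > 0"
    and solvable: "\<And>y. \<exists>x. minimizes F (\<lambda>x. auglag f E q rho x y) x"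
    and x: "minimizes F (\<lambda>x. auglag f E q rho x y) x"
  shows "((\<lambda>y. Inf ((\<lambda>x. auglag f E q rho x y) ` F)) has_derivative (\<lambda>v. (q - E *v x) \<bullet> v)) (at y)"
proof (rule has_derivative_quadratic_remainder)
  show "bounded_linear (\<lambda>v. (q - E *v x) \<bullet> v)" by (rule bounded_linear_inner_right)
  show "2/rho > 0" using \<open>rho > 0\<close> by simp
  fix y'
  obtain z where "minimizes F (\<lambda>x. auglag f E q rho x y') z" using solvable by blast
  from dual_second_order_bound[OF assms(1-3) x this]
  show "\<bar>Inf ((\<lambda>x. auglag f E q rho x y') ` F) - Inf ((\<lambda>x. auglag f E q rho x y) ` F)
          - (q - E *v x) \<bullet> (y' - y)\<bar> \<le> 2/rho * (norm (y' - y))\<^sup>2" .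
qed

lemma linear_blockproj: "linear (blockproj blk k)"
  by (rule linearI) (simp_all add: blockproj_def vec_eq_iff)

lemma convex_on_linear_compose:
  assumes "linear \<psi>" "convex_on S f" "convex T" "\<psi> ` T \<subseteq> S"
  shows "convex_on T (\<lambda>x. f (\<psi> x))"
proof (rule convex_onI[OF _ \<open>convex T\<close>])
  fix t :: real and x y assume "0 < t" "t < 1" "x \<in> T" "y \<in> T"
  then show "f (\<psi> ((1 - t) *\<^sub>R x + t *\<^sub>R y)) \<le> (1 - t) * f (\<psi> x) + t * f (\<psi> y)"
    using convex_onD[OF assms(2), of t "\<psi> x" "\<psi> y"] assms(4)
    by (simp add: linear_add[OF assms(1)] linear_scale[OF assms(1)] image_subset_iff)
qed

lemma convex_on_sum_fun:
  assumes "finite I" "convex S" "\<And>i. i \<in> I \<Longrightarrow> convex_on S (f i)"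
  shows "convex_on S (\<lambda>x. \<Sum>i\<in>I. f i x)"
  using assms(1,3)
proof (induction I rule: finite_induct)
  case empty
  then show ?case using \<open>convex S\<close> by (simp add: convex_on_const)
next
  case (insert i I)
  then show ?case by (simp add: convex_on_add)
qed

lemma blockproj_combination:
  "blockproj blk k (u *\<^sub>R x + v *\<^sub>R z) = u *\<^sub>R blockproj blk k x + v *\<^sub>R blockproj blk k z"
  using linear_blockproj[of blk k] by (simp add: linear_add linear_scale)

lemma convex_feasible_set:
  fixes A :: "'k \<Rightarrow> real^'n^'p"
  assumes "\<And>k. convex (X k)" "\<And>k. convex (Dg k)" "\<And>k. convex (Dh k)"
  shows "convex (Xprod blk X \<inter> domf blk A Dg Dh)"
proof (rule convexI)
  fix x z :: "real^'n" and u v :: real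
  assume "x \<in> Xprod blk X \<inter> domf blk A Dg Dh" "z \<in> Xprod blk X \<inter> domf blk A Dg Dh"
    and "0 \<le> u" "0 \<le> v" "u + v = 1"
  then show "u *\<^sub>R x + v *\<^sub>R z \<in> Xprod blk X \<inter> domf blk A Dg Dh"
    using convexD[OF assms(1)] convexD[OF assms(2)] convexD[OF assms(3)]
    by (simp add: Xprod_def domf_def blockproj_combination matrix_vector_right_distrib
        matrix_vector_mult_scaleR)
qed

lemma convex_on_objf:
  fixes A :: "'k::finite \<Rightarrow> real^'n^'p"
  assumes "convex F" "F \<subseteq> domf blk A Dg Dh"
    and "\<And>k. convex_on (Dg k) (g k)" "\<And>k. convex_on (Dh k) (h k)"
  shows "convex_on F (objf blk A g h)"
  unfolding objf_def
proof (intro convex_on_sum_fun convex_on_add \<open>convex F\<close> finite)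
  fix k
  have "linear (\<lambda>x. A k *v blockproj blk k x)"
    using linear_compose[OF linear_blockproj matrix_vector_mul_linear] by (simp add: o_def)
  then show "convex_on F (\<lambda>x. g k (A k *v blockproj blk k x))"
    using assms(2) by (intro convex_on_linear_compose[OF _ assms(3) \<open>convex F\<close>]) (auto simp: domf_def)
  show "convex_on F (\<lambda>x. h k (blockproj blk k x))"
    using assms(2) by (intro convex_on_linear_compose[OF linear_blockproj assms(4) \<open>convex F\<close>])
      (auto simp: domf_def)
qed

lemma strict_convex_on_midpoint:
  assumes "strict_convex_on S f" "a \<in> S" "b \<in> S" "a \<noteq> b"
  shows "f ((1/2) *\<^sub>R a + (1/2) *\<^sub>R b) < (f a + f b) / 2"
proof -
  have "\<forall>t::real. 0 < t \<and> t < 1 \<longrightarrow>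
      f ((1 - t) *\<^sub>R a + t *\<^sub>R b) < (1 - t) * f a + t * f b"
    using assms unfolding strict_convex_on_def by blast
  from this[rule_format, of "1/2"] show ?thesis by simp
qed

lemma objf_midpoint_strict:
  fixes A :: "'k::finite \<Rightarrow> real^'n^'p"
  assumes "a \<in> domf blk A Dg Dh" "b \<in> domf blk A Dg Dh"
    and "\<And>j. convex_on (Dg j) (g j)" "\<And>j. convex_on (Dh j) (h j)"
    and strict: "strict_convex_on (Dg k) (g k)"
    and differ: "A k *v blockproj blk k a \<noteq> A k *v blockproj blk k b"
  shows "objf blk A g h ((1/2) *\<^sub>R a + (1/2) *\<^sub>R b) < (objf blk A g h a + objf blk A g h b) / 2"
proof -
  let ?term = "\<lambda>j x. g j (A j *v blockproj blk j x) + h j (blockproj blk j x)"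
  let ?m = "(1/2) *\<^sub>R a + (1/2) *\<^sub>R b"
  have mid: "blockproj blk j ?m = (1/2) *\<^sub>R blockproj blk j a + (1/2) *\<^sub>R blockproj blk j b"
    "A j *v blockproj blk j ?m = (1/2) *\<^sub>R (A j *v blockproj blk j a) + (1/2) *\<^sub>R (A j *v blockproj blk j b)"
    for j by (simp_all add: blockproj_combination matrix_vector_right_distrib matrix_vector_mult_scaleR)
  have dom: "A j *v blockproj blk j a \<in> Dg j" "A j *v blockproj blk j b \<in> Dg j"
    "blockproj blk j a \<in> Dh j" "blockproj blk j b \<in> Dh j" for j
    using assms(1,2) unfolding domf_def by auto
  have g_mid: "g j (A j *v blockproj blk j ?m)
      \<le> (g j (A j *v blockproj blk j a) + g j (A j *v blockproj blk j b)) / 2" for j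
    unfolding mid(2) by (rule convex_on_midpoint[OF assms(3) dom(1,2)])
  have h_mid: "h j (blockproj blk j ?m) \<le> (h j (blockproj blk j a) + h j (blockproj blk j b)) / 2" for j
    unfolding mid(1) by (rule convex_on_midpoint[OF assms(4) dom(3,4)])
  have g_mid_strict: "g k (A k *v blockproj blk k ?m)
      < (g k (A k *v blockproj blk k a) + g k (A k *v blockproj blk k b)) / 2"
    unfolding mid(2) by (rule strict_convex_on_midpoint[OF strict dom(1,2) differ])
  have "(\<Sum>j\<in>UNIV. ?term j ?m) < (\<Sum>j\<in>UNIV. (?term j a + ?term j b) / 2)"
  proof (rule sum_strict_mono_ex1)
    show "\<forall>j\<in>UNIV. ?term j ?m \<le> (?term j a + ?term j b) / 2"
    proof
      fix j show "?term j ?m \<le> (?term j a + ?term j b) / 2"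
        using add_mono[OF g_mid[of j] h_mid[of j]] by (simp add: add_divide_distrib ac_simps)
    qed
    show "\<exists>j\<in>UNIV. ?term j ?m < (?term j a + ?term j b) / 2"
      using g_mid_strict h_mid[of k] by (intro bexI[of _ k]) (simp_all add: add_divide_distrib)
  qed simp
  then show ?thesis unfolding objf_def by (simp add: sum.distrib sum_divide_distrib[symmetric])
qed

theorem lemma2p1:
  fixes blk :: "'n::finite \<Rightarrow> 'k::finite"
    and E :: "real^'n^'m::finite" and q :: "real^'m"
    and X :: "'k \<Rightarrow> (real^'n) set"
    and A :: "'k \<Rightarrow> real^'n^'p::finite"
    and g :: "'k \<Rightarrow> real^'p \<Rightarrow> real" and Dg :: "'k \<Rightarrow> (real^'p) set"
    and gradg :: "'k \<Rightarrow> real^'p \<Rightarrow> real^'p"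
    and h :: "'k \<Rightarrow> real^'n \<Rightarrow> real" and Dh :: "'k \<Rightarrow> (real^'n) set"
    and Lip rho :: real
  defines "f \<equiv> objf blk A g h"
    and "F \<equiv> Xprod blk X \<inter> domf blk A Dg Dh"
    and "Lag \<equiv> auglag (objf blk A g h) E q rho"
    and "d \<equiv> \<lambda>y. Inf ((\<lambda>x. auglag (objf blk A g h) E q rho x y) ` (Xprod blk X \<inter> domf blk A Dg Dh))"
    and "Xmin \<equiv> \<lambda>y. {x \<in> Xprod blk X \<inter> domf blk A Dg Dh. \<forall>x' \<in> Xprod blk X \<inter> domf blk A Dg Dh.
                    auglag (objf blk A g h) E q rho x y \<le> auglag (objf blk A g h) E q rho x' y}"
    and "d0 \<equiv> \<lambda>y. (INF x\<in>Xprod blk X \<inter> domf blk A Dg Dh. ereal (objf blk A g h x + y \<bullet> (q - E *v x)))"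
  assumes rho_pos: "rho > 0"
    (* A(a) *)
    and primal_attained: "\<exists>xs\<in>F. E *v xs = q \<and>
                              (\<forall>x\<in>F. E *v x = q \<longrightarrow> f xs \<le> f x)"
    and dual_attained: "\<exists>ys. d0 ys \<noteq> -\<infinity> \<and> (\<forall>y. d0 y \<le> d0 ys)"
    and slater: "Xprod blk X \<inter> interior (domf blk A Dg Dh) \<inter> {x. E *v x = q} \<noteq> {}"
    (* A(b) *)
    and g_cvx: "\<And>k. convex (Dg k) \<and> convex_on (Dg k) (g k) \<and> continuous_on (Dg k) (g k)"
    and h_cvx: "\<And>k. convex (Dh k) \<and> convex_on (Dh k) (h k) \<and> continuous_on (Dh k) (h k)"
    (* A(c) *)
    and g_strict: "\<And>k. strict_convex_on (Dg k) (g k)"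
    and g_grad: "\<And>k u. u \<in> interior (Dg k) \<Longrightarrow>
                    (g k has_derivative (\<lambda>v. gradg k u \<bullet> v)) (at u)"
    and g_C1: "\<And>k. continuous_on (interior (Dg k)) (gradg k)"
    and Lip_pos: "Lip > 0"
    and g_Lip: "\<And>k xk xk'. xk \<in> X k \<Longrightarrow> xk' \<in> X k \<Longrightarrow>
        norm (transpose (A k) *v gradg k (A k *v xk) - transpose (A k) *v gradg k (A k *v xk'))
          \<le> Lip * norm (xk - xk')"
    (* A(d) *)
    and h_type: "\<And>k. admissible_h blk k (Dh k) (h k)"
    (* A(e) *)
    and h_finite: "\<And>y \<xi>. \<forall>x \<in> F. Lag x y \<le> \<xi> \<longrightarrow> (\<forall>k. blockproj blk k x \<in> Dh k)"
    (* A(f) *)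
    and E_rank: "\<And>k v. v \<in> blocksub blk k \<Longrightarrow> E *v v = 0 \<Longrightarrow> v = 0"
    (* A(g) *)
    and X_poly: "\<And>k. X k \<subseteq> blocksub blk k \<and> compact (X k) \<and> polyhedron (X k)"
  shows "(\<forall>y. Xmin y \<noteq> {} \<longrightarrow>
            (\<forall>x\<in>Xmin y. \<forall>x'\<in>Xmin y. E *v x = E *v x' \<and>
               (\<forall>k. A k *v blockproj blk k x = A k *v blockproj blk k x')))
       \<and> ((\<forall>y. Xmin y \<noteq> {}) \<longrightarrow>
            (\<forall>y. d differentiable (at y) \<and>
                 (\<forall>x\<in>Xmin y. (d has_derivative (\<lambda>v. (q - E *v x) \<bullet> v)) (at y))))"
proof -
  let ?L = "\<lambda>y x. auglag (objf blk A g h) E q rho x y"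
  have Xmin_eq: "Xmin y = {x. minimizes F (?L y) x}" for y
    unfolding Xmin_def F_def minimizes_def by blast
  have d_eq: "d = (\<lambda>y. Inf ((\<lambda>x. ?L y x) ` F))" unfolding d_def F_def ..
  have convex_F: "convex F"
    unfolding F_def using X_poly g_cvx h_cvx
    by (intro convex_feasible_set) (auto intro: polyhedron_imp_convex)
  have g_convex: "\<And>k. convex_on (Dg k) (g k)" and h_convex: "\<And>k. convex_on (Dh k) (h k)"
    using g_cvx h_cvx by blast+
  have convex_f: "convex_on F (objf blk A g h)"
    using convex_F g_convex h_convex unfolding F_def by (intro convex_on_objf) auto
  have unique: "E *v x = E *v x' \<and> (\<forall>k. A k *v blockproj blk k x = A k *v blockproj blk k x')"
    if "x \<in> Xmin y" "x' \<in> Xmin y" for x x' y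
  proof -
    have x: "minimizes F (?L y) x" and x': "minimizes F (?L y) x'" using that Xmin_eq by auto
    have "x \<in> domf blk A Dg Dh" "x' \<in> domf blk A Dg Dh" using x x' unfolding minimizes_def F_def by auto
    then have "A k *v blockproj blk k x = A k *v blockproj blk k x'" for k
      using objf_midpoint_strict[where g = g and h = h, OF _ _ g_convex h_convex g_strict]
        minimizers_same_residual(2)[OF convex_F convex_f rho_pos x x'] by fastforce
    then show ?thesis using minimizers_same_residual(1)[OF convex_F convex_f rho_pos x x'] by blast
  qed
  have gradient: "(d has_derivative (\<lambda>v. (q - E *v x) \<bullet> v)) (at y)"
    if "\<forall>y. Xmin y \<noteq> {}" "x \<in> Xmin y" for x y
    unfolding d_eq using that Xmin_eq
    by (intro dual_has_derivative[OF convex_F convex_f rho_pos]) auto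
  show ?thesis using unique gradient unfolding differentiable_def by blast
qed

end
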